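(* Let $1<p\leq\infty$ (with $1/\infty=0$) and let $M\in\mathcal C^3$ be a normalized Orlicz function with $M'(0)=0$ that is linear on $[M^{-1}(1),\infty)$ and such that \[ f_X(x)=\Big(1-\frac{2}{p}\Big)\frac{1}{x^3}M''\Big(\frac1x\Big)-\frac{1}{px^4}M'''\Big(\frac1x\Big) \] is non-negative for all $x>0$. Let $X$ be a random variable with density $f_X$ on $(0,\infty)$. Then $M_{X,p}(s)=M(s)$ for all $s\geq0$, where for $1<p<\infty$ \[ M_{X,p}(s)=\frac{p}{p-1}\int_0^s\bigg[\int_{\{|X|\le1/t\}}t^{p-1}|X|^p\,\mathrm d\mathbb P+\int_{\{|X|>1/t\}}|X|\,\mathrm d\mathbb P\bigg]\mathrm dt, \] and for $p=\infty$, $M_{X,\infty}(s)=\int_0^s\int_{\{|X|\ge1/t\}}|X|\,\mathrm d\mathbb P\,\mathrm dt$.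
   Context: An Orlicz function is a convex $M:[0,\infty)\to[0,\infty)$ with $M(0)=0$, $M(t)>0$ for $t>0$; it is normalized if $\int_0^\infty x\,\mathrm dM'(x)=1$, $M'$ denoting the right derivative. *)

theory Defs
  imports "HOL-Probability.Probability"
begin

definition orlicz :: "(real \<Rightarrow> real) \<Rightarrow> bool" where
  "orlicz M \<longleftrightarrow> convex_on {0..} M \<and> M 0 = 0 \<and> (\<forall>t>0. M t > 0)"

definition right_deriv :: "(real \<Rightarrow> real) \<Rightarrow> real \<Rightarrow> real" where
  "right_deriv M x = Lim (at_right 0) (\<lambda>h. (M (x + h) - M x) / h)"

text \<open>Normalization: the Lebesgue-Stieltjes integral of x with respect to dM' over
  [0,inf) equals 1 (M' the right derivative, extended constantly to the left of 0;
  the point 0 carries weight x = 0 and is omitted).\<close>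
definition normalized_orlicz :: "(real \<Rightarrow> real) \<Rightarrow> bool" where
  "normalized_orlicz M \<longleftrightarrow>
     (\<integral>\<^sup>+ x \<in> {0<..}. ennreal x \<partial>interval_measure (\<lambda>x. right_deriv M (max 0 x))) = 1"

definition orlicz_inv :: "(real \<Rightarrow> real) \<Rightarrow> real \<Rightarrow> real" where
  "orlicz_inv M y = (THE t. 0 \<le> t \<and> M t = y)"

definition inv_p :: "ereal \<Rightarrow> real" where
  "inv_p p = (if p = \<infinity> then 0 else 1 / real_of_ereal p)"

definition M_Xp :: "'a measure \<Rightarrow> ('a \<Rightarrow> real) \<Rightarrow> ereal \<Rightarrow> real \<Rightarrow> ennreal" where
  "M_Xp P X p s =
    (if p = \<infinity> then
       (\<integral>\<^sup>+ t \<in> {0..s}. (\<integral>\<^sup>+ \<omega>. indicator {\<omega>. \<bar>X \<omega>\<bar> \<ge> 1 / t} \<omega> * ennreal \<bar>X \<omega>\<bar> \<partial>P) \<partial>lborel)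
     else
       (let q = real_of_ereal p in
        ennreal (q / (q - 1)) *
        (\<integral>\<^sup>+ t \<in> {0..s}.
           (\<integral>\<^sup>+ \<omega>. indicator {\<omega>. \<bar>X \<omega>\<bar> \<le> 1 / t} \<omega> * ennreal (t powr (q - 1) * \<bar>X \<omega>\<bar> powr q)
                  + indicator {\<omega>. \<bar>X \<omega>\<bar> > 1 / t} \<omega> * ennreal \<bar>X \<omega>\<bar> \<partial>P) \<partial>lborel)))"

end

theory Submission
  imports Defs
begin

text \<open>Write \<open>r = 1/p\<close>. Up to the weights \<open>x\<close> and \<open>x\<^sup>p\<close> the density is an explicit derivative:
  \<open>x f\<^sub>X(x)\<close> is the derivative of \<open>r M''(1/x)/x - (1 - r) M'(1/x)\<close> and \<open>x\<^sup>p f\<^sub>X(x)\<close> that of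
  \<open>x\<^sup>p\<^sup>-\<^sup>2 M''(1/x)/p\<close>. Since \<open>M\<close> is affine far out, \<open>M''\<close> vanishes near infinity, so \<open>f\<^sub>X\<close>
  vanishes near \<open>0\<close> and both antiderivatives have trivial boundary values (at \<open>\<infinity>\<close> because
  \<open>M'(0) = 0\<close>). The fundamental theorem of calculus then evaluates the integrand of \<open>M\<^sub>X\<^sub>,\<^sub>p\<close> at
  \<open>t\<close> as \<open>r t M''(t) + ((1 - r) M'(t) - r t M''(t)) = (1 - r) M'(t)\<close>; integrating in \<open>t\<close> gives
  \<open>(1 - r) M(s)\<close>, which the factor \<open>p/(p - 1)\<close> cancels.\<close>

lemma DERIV_eq_slope_of_affine:
  fixes f f' :: "real \<Rightarrow> real"
  assumes deriv: "\<And>x. c < x \<Longrightarrow> DERIV f x :> f' x"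
    and affine: "\<And>x. c < x \<Longrightarrow> f x = a * x + b" and "c < x"
  shows "f' x = a"
proof -
  have "DERIV (\<lambda>x. a * x + b) x :> f' x"
    by (rule has_field_derivative_transform_within_open[OF deriv, of x "{c<..}"])
       (use assms in auto)
  moreover have "DERIV (\<lambda>x. a * x + b) x :> a"
    by (auto intro!: derivative_eq_intros)
  ultimately show ?thesis
    by (rule DERIV_unique)
qed

lemma DERIV_within_atLeast_imp_DERIV:
  fixes f :: "real \<Rightarrow> real"
  assumes "(f has_real_derivative D) (at x within {a..})" and "a < x"
  shows "DERIV f x :> D"
  using assms at_within_interior[of x "{a..}"] by simp

lemma DERIV_comp_inverse:
  fixes f :: "real \<Rightarrow> real"
  assumes "DERIV f (1 / x) :> D" and "x \<noteq> 0"
  shows "DERIV (\<lambda>x. f (1 / x)) x :> - D / x\<^sup>2"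
proof -
  have "DERIV (\<lambda>x. 1 / x) x :> - 1 / x\<^sup>2"
    using assms(2) by (auto intro!: derivative_eq_intros simp: power2_eq_square)
  from DERIV_chain2[OF assms(1) this] show ?thesis
    by simp
qed

lemma DERIV_nonneg_tendsto_0_imp_nonpos:
  fixes G g :: "real \<Rightarrow> real"
  assumes "\<And>x. a \<le> x \<Longrightarrow> DERIV G x :> g x" and "\<And>x. a \<le> x \<Longrightarrow> 0 \<le> g x"
    and "(G \<longlongrightarrow> 0) at_top"
  shows "G a \<le> 0"
proof -
  have "\<forall>\<^sub>F y in at_top. G a \<le> G y"
    using eventually_ge_at_top[of a]
  proof eventually_elim
    case (elim y)
    show ?case
      by (rule DERIV_nonneg_imp_nondecreasing[OF elim]) (use assms(1,2) in blast)
  qed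
  from tendsto_lowerbound[OF assms(3) this] show ?thesis
    by simp
qed

lemma nn_integral_atLeastAtMost_FTC:
  fixes F f :: "real \<Rightarrow> real"
  assumes "a \<le> b"
    and deriv: "\<And>x. x \<in> {a..b} \<Longrightarrow> (F has_real_derivative f x) (at x within {a..b})"
    and nonneg: "\<And>x. x \<in> {a..b} \<Longrightarrow> 0 \<le> f x"
  shows "(\<integral>\<^sup>+x. ennreal (f x) * indicator {a..b} x \<partial>lborel) = ennreal (F b - F a)"
    and "F a \<le> F b"
proof -
  have I: "(f has_integral F b - F a) {a..b}"
    using assms(1) deriv
    by (intro fundamental_theorem_of_calculus) (auto simp: has_real_derivative_iff_has_vector_derivative)
  show "(\<integral>\<^sup>+x. ennreal (f x) * indicator {a..b} x \<partial>lborel) = ennreal (F b - F a)"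
    using nonneg I by (rule nn_integral_has_integral_lebesgue')
  show "F a \<le> F b"
    using has_integral_nonneg[OF I nonneg] by simp
qed

text \<open>The hypotheses of the theorem, with the affinity of \<open>M\<close> replaced by its consequence that
  \<open>M''\<close> vanishes on \<open>(c, \<infinity>)\<close>.\<close>

locale generating_density =
  fixes p :: ereal and M M1 M2 M3 :: "real \<Rightarrow> real" and c :: real
    and P :: "'a measure" and X :: "'a \<Rightarrow> real" and fX :: "real \<Rightarrow> real"
  assumes p_gt_1: "1 < p"
    and M_deriv: "\<And>x. 0 \<le> x \<Longrightarrow> (M has_real_derivative M1 x) (at x within {0..})"
    and M1_deriv: "\<And>x. 0 < x \<Longrightarrow> DERIV M1 x :> M2 x"
    and M2_deriv: "\<And>x. 0 < x \<Longrightarrow> DERIV M2 x :> M3 x"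
    and M1_0: "M1 0 = 0"
    and M1_cont: "continuous (at_right 0) M1"
    and M2_cont: "continuous (at_right 0) M2"
    and c_pos: "0 < c"
    and M2_vanishes: "\<And>x. c < x \<Longrightarrow> M2 x = 0"
    and fX_eq: "\<And>x. 0 < x \<Longrightarrow> fX x =
        (1 - 2 * inv_p p) * (1 / x ^ 3) * M2 (1 / x) - inv_p p * (1 / x ^ 4) * M3 (1 / x)"
    and fX_nonneg: "\<And>x. 0 < x \<Longrightarrow> 0 \<le> fX x"
    and X_distributed: "distributed P lborel X (\<lambda>x. ennreal (if 0 < x then fX x else 0))"
begin

definition dens :: "real \<Rightarrow> real" where
  "dens x = (if 0 < x then fX x else 0)"

lemma M3_vanishes: "c < x \<Longrightarrow> M3 x = 0"
  using DERIV_eq_slope_of_affine[of c M2 M3 0 0 x] M2_deriv M2_vanishes c_pos by auto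

lemma dens_vanishes: "x < 1 / c \<Longrightarrow> dens x = 0"
proof (cases "0 < x")
  case True
  assume "x < 1 / c"
  with True c_pos have "c < 1 / x"
    by (simp add: field_simps)
  with True show ?thesis
    by (simp add: dens_def fX_eq M2_vanishes M3_vanishes)
qed (simp add: dens_def)

lemma dens_nonneg: "0 \<le> dens x"
  by (simp add: dens_def fX_nonneg)

lemma borel_measurable_dens: "dens \<in> borel_measurable borel"
proof -
  have "(\<lambda>x. ennreal (dens x)) \<in> borel_measurable borel"
    using distributed_borel_measurable[OF X_distributed] by (simp add: dens_def)
  then have "(\<lambda>x. enn2real (ennreal (dens x))) \<in> borel_measurable borel"
    by measurable
  then show ?thesis
    using dens_nonneg by simp
qed

lemma nn_integral_distributed_X:
  "g \<in> borel_measurable borel \<Longrightarrow>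
    (\<integral>\<^sup>+\<omega>. g (X \<omega>) \<partial>P) = (\<integral>\<^sup>+x. ennreal (dens x) * g x \<partial>lborel)"
  using distributed_nn_integral[OF X_distributed, of g] by (simp add: dens_def)

definition tail_antideriv :: "real \<Rightarrow> real" where
  "tail_antideriv x = inv_p p * (M2 (1 / x) / x) - (1 - inv_p p) * M1 (1 / x)"

lemma tail_antideriv_inverse: "- tail_antideriv (1 / t) = (1 - inv_p p) * M1 t - inv_p p * t * M2 t"
  by (simp add: tail_antideriv_def)

lemma DERIV_tail_antideriv:
  assumes x: "0 < x"
  shows "DERIV tail_antideriv x :> x * dens x"
proof -
  have "DERIV tail_antideriv x :>
      inv_p p * ((- M3 (1/x) / x\<^sup>2 * x - M2 (1/x) * 1) / (x * x)) - (1 - inv_p p) * (- M2 (1/x) / x\<^sup>2)"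
    unfolding tail_antideriv_def[abs_def] using x
    by (intro DERIV_diff DERIV_cmult DERIV_divide DERIV_ident DERIV_comp_inverse M1_deriv M2_deriv) auto
  then show ?thesis
    by (rule DERIV_cong) (use x in \<open>simp add: dens_def fX_eq field_simps eval_nat_numeral\<close>)
qed

lemma tail_antideriv_tendsto: "(tail_antideriv \<longlongrightarrow> 0) at_top"
proof -
  have "((\<lambda>x. f (1 / x)) \<longlongrightarrow> f 0) at_top" if "continuous (at_right 0) f" for f :: "real \<Rightarrow> real"
    using filterlim_compose[OF that[unfolded continuous_within] filterlim_inverse_at_right_top]
    by (simp add: inverse_eq_divide)
  from this[OF M1_cont] this[OF M2_cont] have
    "((\<lambda>x. inv_p p * (M2 (1 / x) / x) - (1 - inv_p p) * M1 (1 / x)) \<longlongrightarrow> inv_p p * 0 - (1 - inv_p p) * 0) at_top"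
    by (intro tendsto_intros tendsto_divide_0[OF _ filterlim_at_top_imp_at_infinity[OF filterlim_ident]])
       (simp_all add: M1_0)
  then show ?thesis
    by (simp add: tail_antideriv_def[abs_def])
qed

lemma nn_integral_tail:
  assumes t: "0 < t"
  shows "(\<integral>\<^sup>+x. ennreal (x * dens x) * indicator {1/t..} x \<partial>lborel) = ennreal (- tail_antideriv (1/t))"
    and "0 \<le> - tail_antideriv (1/t)"
proof -
  have pos: "0 < x" if "1/t \<le> x" for x
    using that t by (meson less_le_trans zero_less_divide_1_iff)
  have nonneg: "0 \<le> x * dens x" if "1/t \<le> x" for x
    using pos[OF that] dens_nonneg[of x] by simp
  have meas: "(\<lambda>x. x * dens x) \<in> borel_measurable borel"
    using borel_measurable_dens by measurable
  have "(\<integral>\<^sup>+x. ennreal (x * dens x) * indicator {1/t..} x \<partial>lborel) = ennreal (0 - tail_antideriv (1/t))"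
    by (rule nn_integral_FTC_atLeast[OF meas DERIV_tail_antideriv _ tail_antideriv_tendsto])
       (use pos nonneg in auto)
  then show "(\<integral>\<^sup>+x. ennreal (x * dens x) * indicator {1/t..} x \<partial>lborel) = ennreal (- tail_antideriv (1/t))"
    by simp
  show "0 \<le> - tail_antideriv (1/t)"
    using DERIV_nonneg_tendsto_0_imp_nonpos[OF DERIV_tail_antideriv nonneg tail_antideriv_tendsto] pos
    by simp
qed

context
  fixes q :: real
  assumes p_eq: "p = ereal q"
begin

lemma q_gt_1: "1 < q"
  using p_gt_1 p_eq by simp

lemma inv_p_eq: "inv_p p = 1 / q"
  using p_eq by (simp add: inv_p_def)

definition head_antideriv :: "real \<Rightarrow> real" where
  "head_antideriv x = x powr (q - 2) * M2 (1 / x) / q"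

lemma head_antideriv_inverse:
  assumes "0 < t"
  shows "t powr (q - 1) * head_antideriv (1 / t) = inv_p p * t * M2 t"
proof -
  have "t powr (q - 1) * (1 / t) powr (q - 2) = t"
    using assms by (simp add: powr_divide powr_diff[symmetric])
  then show ?thesis
    by (simp add: head_antideriv_def inv_p_eq)
qed

lemma DERIV_head_antideriv:
  assumes x: "0 < x"
  shows "DERIV head_antideriv x :> x powr q * dens x"
proof -
  have "DERIV (\<lambda>x. x powr (q - 2)) x :> (q - 2) * x powr (q - 2 - 1)"
    using x by (auto intro!: derivative_eq_intros)
  then have "DERIV head_antideriv x :>
      ((q - 2) * x powr (q - 2 - 1) * M2 (1/x) + (- M3 (1/x) / x\<^sup>2) * x powr (q - 2)) / q"
    unfolding head_antideriv_def[abs_def] using x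
    by (intro DERIV_cdivide DERIV_mult DERIV_comp_inverse M2_deriv) auto
  moreover have "x powr (q - 2 - 1) = x powr q / x ^ 3" "x powr (q - 2) = x powr q / x ^ 2"
    using x by (simp_all add: powr_diff diff_diff_eq)
  ultimately have deriv: "DERIV head_antideriv x :>
      ((q - 2) * (x powr q / x ^ 3) * M2 (1/x) + (- M3 (1/x) / x\<^sup>2) * (x powr q / x ^ 2)) / q"
    by (simp only:)
  have dens_x: "dens x = (1 - 2 * (1/q)) * (1 / x ^ 3) * M2 (1 / x) - (1/q) * (1 / x ^ 4) * M3 (1 / x)"
    using x by (simp add: dens_def fX_eq inv_p_eq)
  show ?thesis
    unfolding dens_x
    by (rule DERIV_cong[OF deriv]) (use x q_gt_1 in \<open>simp add: field_simps eval_nat_numeral\<close>)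
qed

lemma head_antideriv_vanishes:
  assumes "0 < x" and "x < 1 / c"
  shows "head_antideriv x = 0"
proof -
  have "c < 1 / x"
    using assms c_pos by (simp add: field_simps)
  then show ?thesis
    by (simp add: head_antideriv_def M2_vanishes)
qed

lemma nn_integral_head:
  assumes b: "0 < b"
  shows "(\<integral>\<^sup>+x. ennreal (x powr q * dens x) * indicator {..b} x \<partial>lborel) = ennreal (head_antideriv b)"
    and "0 \<le> head_antideriv b"
proof -
  define a where "a = 1 / (2 * c)"
  have a: "0 < a" "a < 1 / c"
    using c_pos by (simp_all add: a_def field_simps)
  have "(\<integral>\<^sup>+x. ennreal (x powr q * dens x) * indicator {..b} x \<partial>lborel) = ennreal (head_antideriv b) \<and>
      0 \<le> head_antideriv b"
  proof (cases "b < 1 / c")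
    case True
    have "(\<integral>\<^sup>+x. ennreal (x powr q * dens x) * indicator {..b} x \<partial>lborel) = (\<integral>\<^sup>+(x::real). 0 \<partial>lborel)"
    proof (intro nn_integral_cong)
      fix x :: real
      show "ennreal (x powr q * dens x) * indicator {..b} x = 0"
        using True by (cases "x \<le> b") (simp_all add: dens_vanishes)
    qed
    with True b show ?thesis
      by (simp add: head_antideriv_vanishes)
  next
    case False
    then have ab: "a \<le> b"
      using a by linarith
    have deriv: "(head_antideriv has_real_derivative x powr q * dens x) (at x within {a..b})"
      if "x \<in> {a..b}" for x
      using a that by (auto intro!: has_field_derivative_at_within[OF DERIV_head_antideriv])
    have nonneg: "0 \<le> x powr q * dens x" for x
      by (simp add: dens_nonneg)
    have "(\<integral>\<^sup>+x. ennreal (x powr q * dens x) * indicator {..b} x \<partial>lborel)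
        = (\<integral>\<^sup>+x. ennreal (x powr q * dens x) * indicator {a..b} x \<partial>lborel)"
    proof (intro nn_integral_cong)
      fix x :: real
      show "ennreal (x powr q * dens x) * indicator {..b} x = ennreal (x powr q * dens x) * indicator {a..b} x"
        using a by (cases "x < a") (simp_all add: dens_vanishes indicator_def)
    qed
    also have "\<dots> = ennreal (head_antideriv b - head_antideriv a)"
      by (rule nn_integral_atLeastAtMost_FTC(1)[OF ab deriv nonneg])
    finally show ?thesis
      using nn_integral_atLeastAtMost_FTC(2)[OF ab deriv nonneg] head_antideriv_vanishes[OF a]
      by simp
  qed
  then show "(\<integral>\<^sup>+x. ennreal (x powr q * dens x) * indicator {..b} x \<partial>lborel) = ennreal (head_antideriv b)"
    and "0 \<le> head_antideriv b"
    by simp_all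
qed

lemma nn_integral_inner_finite:
  assumes t: "0 < t"
  shows "(\<integral>\<^sup>+\<omega>. indicator {\<omega>. \<bar>X \<omega>\<bar> \<le> 1 / t} \<omega> * ennreal (t powr (q - 1) * \<bar>X \<omega>\<bar> powr q)
            + indicator {\<omega>. \<bar>X \<omega>\<bar> > 1 / t} \<omega> * ennreal \<bar>X \<omega>\<bar> \<partial>P)
    = ennreal ((1 - inv_p p) * M1 t)"
proof -
  define g where "g x = indicator {x. \<bar>x\<bar> \<le> 1 / t} x * ennreal (t powr (q - 1) * \<bar>x\<bar> powr q)
      + indicator {x. 1 / t < \<bar>x\<bar>} x * ennreal \<bar>x\<bar>" for x :: real
  define head where "head x = ennreal (x powr q * dens x) * indicator {..1/t} x" for x :: real
  define tail where "tail x = ennreal (x * dens x) * indicator {1/t..} x" for x :: real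
  have g_borel: "g \<in> borel_measurable borel"
    unfolding g_def[abs_def] by measurable
  have head_borel: "head \<in> borel_measurable borel" and tail_borel: "tail \<in> borel_measurable borel"
    unfolding head_def[abs_def] tail_def[abs_def] using borel_measurable_dens by measurable
  have dens_g: "ennreal (dens x) * g x = ennreal (t powr (q - 1)) * head x + tail x" if "x \<noteq> 1 / t" for x
  proof (cases "0 < x")
    case True
    with that dens_nonneg[of x] show ?thesis
      by (auto simp: g_def head_def tail_def indicator_def ennreal_mult[symmetric] mult_ac)
  next
    case False
    with t show ?thesis
      by (simp add: g_def head_def tail_def dens_def indicator_def)
  qed
  have "(\<integral>\<^sup>+\<omega>. indicator {\<omega>. \<bar>X \<omega>\<bar> \<le> 1 / t} \<omega> * ennreal (t powr (q - 1) * \<bar>X \<omega>\<bar> powr q)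
            + indicator {\<omega>. \<bar>X \<omega>\<bar> > 1 / t} \<omega> * ennreal \<bar>X \<omega>\<bar> \<partial>P) = (\<integral>\<^sup>+\<omega>. g (X \<omega>) \<partial>P)"
    by (simp add: g_def indicator_def)
  also have "\<dots> = (\<integral>\<^sup>+x. ennreal (dens x) * g x \<partial>lborel)"
    by (rule nn_integral_distributed_X[OF g_borel])
  also have "\<dots> = (\<integral>\<^sup>+x. ennreal (t powr (q - 1)) * head x + tail x \<partial>lborel)"
    using AE_lborel_singleton[of "1/t"] by (intro nn_integral_cong_AE) (auto simp: dens_g)
  also have "\<dots> = ennreal (t powr (q - 1)) * (\<integral>\<^sup>+x. head x \<partial>lborel) + (\<integral>\<^sup>+x. tail x \<partial>lborel)"
    using head_borel tail_borel by (simp add: nn_integral_add nn_integral_cmult)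
  also have "\<dots> = ennreal (t powr (q - 1) * head_antideriv (1/t) + - tail_antideriv (1/t))"
    using t nn_integral_head[of "1/t"] nn_integral_tail[OF t]
    by (simp add: head_def tail_def ennreal_mult'[symmetric] ennreal_plus[symmetric])
  also have "t powr (q - 1) * head_antideriv (1/t) + - tail_antideriv (1/t) = (1 - inv_p p) * M1 t"
    using t by (simp add: head_antideriv_inverse tail_antideriv_inverse)
  finally show ?thesis .
qed

end

lemma nn_integral_inner_infinite:
  assumes p: "p = \<infinity>" and t: "0 < t"
  shows "(\<integral>\<^sup>+\<omega>. indicator {\<omega>. \<bar>X \<omega>\<bar> \<ge> 1 / t} \<omega> * ennreal \<bar>X \<omega>\<bar> \<partial>P)
    = ennreal ((1 - inv_p p) * M1 t)"
proof -
  have inv_p_0: "inv_p p = 0"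
    using p by (simp add: inv_p_def)
  define g where "g x = indicator {x. 1 / t \<le> \<bar>x\<bar>} x * ennreal \<bar>x\<bar>" for x :: real
  have g_borel: "g \<in> borel_measurable borel"
    unfolding g_def[abs_def] by measurable
  have dens_g: "ennreal (dens x) * g x = ennreal (x * dens x) * indicator {1/t..} x" for x
  proof (cases "0 < x")
    case True
    with dens_nonneg[of x] show ?thesis
      by (auto simp: g_def indicator_def ennreal_mult[symmetric] mult_ac)
  next
    case False
    with t show ?thesis
      by (simp add: g_def dens_def indicator_def)
  qed
  have "(\<integral>\<^sup>+\<omega>. indicator {\<omega>. \<bar>X \<omega>\<bar> \<ge> 1 / t} \<omega> * ennreal \<bar>X \<omega>\<bar> \<partial>P) = (\<integral>\<^sup>+\<omega>. g (X \<omega>) \<partial>P)"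
    by (simp add: g_def indicator_def)
  also have "\<dots> = (\<integral>\<^sup>+x. ennreal (x * dens x) * indicator {1/t..} x \<partial>lborel)"
    by (simp add: nn_integral_distributed_X[OF g_borel] dens_g)
  also have "\<dots> = ennreal ((1 - inv_p p) * M1 t)"
    by (simp add: nn_integral_tail(1)[OF t] tail_antideriv_inverse inv_p_0)
  finally show ?thesis .
qed

lemma M1_nonneg:
  assumes t: "0 < t"
  shows "0 \<le> M1 t"
proof (cases "p = \<infinity>")
  case True
  then have "inv_p p = 0"
    by (simp add: inv_p_def)
  then show ?thesis
    using nn_integral_tail(2)[OF t] by (simp add: tail_antideriv_inverse)
next
  case False
  then obtain q where q: "p = ereal q"
    using p_gt_1 by (cases p) auto
  have "(1 - 1 / q) * M1 t = t powr (q - 1) * head_antideriv q (1/t) + - tail_antideriv (1/t)"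
    using t by (simp add: head_antideriv_inverse[OF q] tail_antideriv_inverse inv_p_eq[OF q])
  also have "0 \<le> \<dots>"
    using nn_integral_head(2)[OF q, of "1/t"] nn_integral_tail(2)[OF t] t
    by (intro add_nonneg_nonneg mult_nonneg_nonneg) simp_all
  finally show ?thesis
    using q_gt_1[OF q] by (simp add: zero_le_mult_iff)
qed

lemma set_nn_integral_M1:
  assumes C: "0 \<le> C" and s: "0 \<le> s" and h: "\<And>t. 0 < t \<Longrightarrow> h t = ennreal (C * M1 t)"
  shows "(\<integral>\<^sup>+t\<in>{0..s}. h t \<partial>lborel) = ennreal (C * M s - C * M 0)"
proof -
  have "(\<integral>\<^sup>+t\<in>{0..s}. h t \<partial>lborel) = (\<integral>\<^sup>+t. ennreal (C * M1 t) * indicator {0..s} t \<partial>lborel)"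
    using AE_lborel_singleton[of 0] by (intro nn_integral_cong_AE) (auto simp: h split: split_indicator)
  also have "\<dots> = ennreal (C * M s - C * M 0)"
  proof (rule nn_integral_atLeastAtMost_FTC(1)[OF s])
    fix x assume x: "x \<in> {0..s}"
    show "((\<lambda>t. C * M t) has_real_derivative C * M1 x) (at x within {0..s})"
      using x by (intro DERIV_cmult has_field_derivative_subset[OF M_deriv]) auto
    show "0 \<le> C * M1 x"
      using x C M1_nonneg M1_0 by (cases "x = 0") auto
  qed
  finally show ?thesis .
qed

lemma M_Xp_eq:
  assumes s: "0 \<le> s"
  shows "M_Xp P X p s = ennreal (M s - M 0)"
proof (cases "p = \<infinity>")
  case True
  then have "inv_p p = 0"
    by (simp add: inv_p_def)
  then show ?thesis
    using set_nn_integral_M1[OF _ s nn_integral_inner_infinite[OF True]] True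
    by (simp add: M_Xp_def)
next
  case False
  then obtain q where q: "p = ereal q"
    using p_gt_1 by (cases p) auto
  have q1: "1 < q"
    using q_gt_1[OF q] .
  have C: "0 \<le> 1 - inv_p p"
    using q1 by (simp add: inv_p_eq[OF q])
  have "M_Xp P X p s = ennreal (q / (q - 1)) * ennreal ((1 - inv_p p) * M s - (1 - inv_p p) * M 0)"
    using False set_nn_integral_M1[OF C s nn_integral_inner_finite[OF q]]
    by (simp add: M_Xp_def q)
  also have "\<dots> = ennreal (q / (q - 1) * ((1 - inv_p p) * M s - (1 - inv_p p) * M 0))"
    by (rule ennreal_mult'[symmetric]) (use q1 in simp)
  also have "q / (q - 1) * ((1 - inv_p p) * M s - (1 - inv_p p) * M 0) = M s - M 0"
    using q1 by (simp add: inv_p_eq[OF q] field_simps)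
  finally show ?thesis .
qed

end

theorem lemma2p6:
  fixes p :: ereal
    and M M1 M2 M3 :: "real \<Rightarrow> real"
    and P :: "'a measure" and X :: "'a \<Rightarrow> real"
    and fX :: "real \<Rightarrow> real"
  assumes p: "1 < p"
    and orl: "orlicz M" and norm: "normalized_orlicz M"
    and d1: "\<And>x. 0 \<le> x \<Longrightarrow> (M has_real_derivative M1 x) (at x within {0..})"
    and d2: "\<And>x. 0 \<le> x \<Longrightarrow> (M1 has_real_derivative M2 x) (at x within {0..})"
    and d3: "\<And>x. 0 \<le> x \<Longrightarrow> (M2 has_real_derivative M3 x) (at x within {0..})"
    and c3: "continuous_on {0..} M3"
    and M1_0: "M1 0 = 0"
    and lin: "\<exists>a b. \<forall>x \<ge> orlicz_inv M 1. M x = a * x + b"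
    and fX_def: "\<And>x. 0 < x \<Longrightarrow> fX x =
        (1 - 2 * inv_p p) * (1 / x ^ 3) * M2 (1 / x) - inv_p p * (1 / x ^ 4) * M3 (1 / x)"
    and fX_nonneg: "\<And>x. 0 < x \<Longrightarrow> 0 \<le> fX x"
    and P: "prob_space P"
    and X: "distributed P lborel X (\<lambda>x. ennreal (if 0 < x then fX x else 0))"
  shows "\<forall>s \<ge> 0. M_Xp P X p s = ennreal (M s)"
proof -
  obtain a b where affine: "\<And>x. orlicz_inv M 1 \<le> x \<Longrightarrow> M x = a * x + b"
    using lin by blast
  define c where "c = max (orlicz_inv M 1) 1"
  have derivs: "DERIV M x :> M1 x" "DERIV M1 x :> M2 x" "DERIV M2 x :> M3 x" if "0 < x" for x
    using that less_imp_le[OF that] d1 d2 d3 by (blast intro: DERIV_within_atLeast_imp_DERIV)+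
  have right_cont: "continuous (at_right 0) f" if "(f has_real_derivative f') (at 0 within {0..})"
    for f :: "real \<Rightarrow> real" and f'
    by (rule continuous_within_subset[OF DERIV_continuous[OF that]]) auto
  have M1_eq: "M1 x = a" if "c < x" for x
    using DERIV_eq_slope_of_affine[of c M M1 a b x] derivs(1) affine that
    by (simp add: c_def)
  have M2_vanishes: "M2 x = 0" if "c < x" for x
    using DERIV_eq_slope_of_affine[of c M1 M2 0 a x] derivs(2) M1_eq that
    by (simp add: c_def)
  have c_pos: "0 < c"
    by (simp add: c_def)
  interpret generating_density p M M1 M2 M3 c P X fX
    using p d1 derivs(2,3) M1_0 right_cont[OF d2[of 0]] right_cont[OF d3[of 0]]
      c_pos M2_vanishes fX_def fX_nonneg X
    by unfold_locales blast+
  have "M 0 = 0"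
    using orl by (simp add: orlicz_def)
  with M_Xp_eq show ?thesis
    by simp
qed

end
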